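(* Let $0<\underline\beta<\bar\beta$, let $\mathcal P$ be a parameter set, let $G,\tilde G>0$ satisfy the approximation property (AP) of the context, let $a>1$ satisfy $\frac{G}{a}\big(\frac{\ln a}{\ln2}+3\big)^{3/2}\le1$, and let the models $\mathcal S_m$, $m\ge2$, be as in the context. Then there exists a constant $c_{\underline\beta,\bar\beta}>0$ such that for all $\beta\in[\underline\beta,\bar\beta]$, all $s\in\mathcal H(\beta,\mathcal P)$ and all $m\ge2$, $$\mathrm{KL}(s,\mathcal S_m)\le c_{\underline\beta,\bar\beta}\,\underline\lambda(m)^\beta.$$
   Context: $\psi(x)=\pi^{-1/2}e^{-x^2}$, $\psi_\sigma(x)=\sigma^{-1}\psi(x/\sigma)$; $\mathrm{KL}(s,t)=\int s\ln(s/t)$, $\mathrm{KL}(s,\mathcal S)=\inf_{t\in\mathcal S}\mathrm{KL}(s,t)$. For $\beta>0$, $r$ is the largest integer strictly less than $\beta$; a parameter set $\mathcal{P}=\{\gamma,l^+,L,\varepsilon,C,\alpha,\xi,M\}$ (polynomial $L$, positive constants) defines $\mathcal H(\beta,\mathcal P)$: probability densities $f$ with $\ln f$ $r$ times differentiable, $|(\ln f)^{(r)}(x)-(\ln f)^{(r)}(y)|\le r!L(x)|y-x|^{\beta-r}$ for $|x-y|\le\gamma$, $|(\ln f)^{(j)}(0)|\le l^+$; $\int|(\ln f)^{(j)}|^{(2\beta+\varepsilon)/j}f\le C$ ($j=1..r$), $\int|L|^{2+\varepsilon/\beta}f\le C$; $f\le M\psi$; $f>0$ nondecreasing on $(-\infty,-\alpha)$,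 nonincreasing on $(\alpha,\infty)$, $f\ge\xi$ on $[-\alpha,\alpha]$. (AP): for each $\beta\in[\underline\beta,\bar\beta]$ there are $\bar\sigma(\beta)\in(0,1)$ and $c_\beta>0$, both continuous in $\beta$, such that for all $f\in\mathcal H(\beta,\mathcal P)$ and $\sigma\in(0,\bar\sigma(\beta))$ there exists a mixture $\sum_{u=1}^{m'}p_u\psi_\sigma(\cdot-\mu_u)$ with $m'<G\sigma^{-1}|\ln\sigma|^{3/2}$, $|\mu_u|\le\tilde G|\ln\sigma|^{1/2}$ and $\mathrm{KL}(f,\cdot)\le c_\beta\sigma^{2\beta}$. Models: $\sqrt{\underline\lambda(m)}=a\,m^{-1}(\ln m)^{3/2}$, $\bar\mu(m)=\tilde G|\ln\sqrt{\underline\lambda(m)}|^{1/2}$, $\bar\lambda$ a constant with $\bar\lambda>\underline\lambda(m)$ for all $m$, and $\mathcal{S}_m=\{\sum_{u=1}^m p_u\psi_{\sigma_u}(\cdot-\mu_u):\mu_u\in[-\bar\mu(m),\bar\mu(m)],\ \sigma_u^2\in[\underline\lambda(m),\bar\lambda],\ p_u\in[0,1],\ \sum p_u=1\}$. *)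

theory Defs
  imports "HOL-Analysis.Analysis" "HOL-Computational_Algebra.Polynomial"
begin

definition psi :: "real \<Rightarrow> real" where
  "psi x = exp (- (x\<^sup>2)) / sqrt pi"

definition psi_s :: "real \<Rightarrow> real \<Rightarrow> real" where
  "psi_s \<sigma> x = psi (x / \<sigma>) / \<sigma>"

text \<open>If t vanishes on a set of positive measure where s is positive, KL is infinite.
  Otherwise the negative part of s ln(s/t) is always integrable for densities,
  so non-integrability means KL = +infinity.\<close>
definition KL :: "(real \<Rightarrow> real) \<Rightarrow> (real \<Rightarrow> real) \<Rightarrow> ereal" where
  "KL s t =
    (if (AE x in lborel. s x > 0 \<longrightarrow> t x > 0)
        \<and> integrable lborel (\<lambda>x. s x * ln (s x / t x))
     then ereal (\<integral>x. s x * ln (s x / t x) \<partial>lborel)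
     else \<infinity>)"

definition KL_set :: "(real \<Rightarrow> real) \<Rightarrow> (real \<Rightarrow> real) set \<Rightarrow> ereal" where
  "KL_set s S = (INF t\<in>S. KL s t)"

definition is_density :: "(real \<Rightarrow> real) \<Rightarrow> bool" where
  "is_density f \<longleftrightarrow> f \<in> borel_measurable borel \<and> (\<forall>x. f x \<ge> 0)
     \<and> (\<integral>\<^sup>+x. ennreal (f x) \<partial>lborel) = 1"

text \<open>r = largest integer strictly less than beta (for beta > 0).\<close>
definition r_of :: "real \<Rightarrow> nat" where
  "r_of \<beta> = nat (\<lceil>\<beta>\<rceil> - 1)"

definition lder :: "nat \<Rightarrow> (real \<Rightarrow> real) \<Rightarrow> real \<Rightarrow> real" where
  "lder j f = (deriv ^^ j) (\<lambda>x. ln (f x))"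

definition Hclass ::
  "real \<Rightarrow> real \<Rightarrow> real \<Rightarrow> real poly \<Rightarrow> real \<Rightarrow> real \<Rightarrow> real \<Rightarrow> real \<Rightarrow> real
     \<Rightarrow> (real \<Rightarrow> real) set" where
  "Hclass \<beta> \<gamma> lp L \<epsilon> C \<alpha> \<xi> M = {f.
     is_density f \<and>
     (\<forall>x. f x > 0) \<and>
     (\<forall>j < r_of \<beta>. \<forall>x. lder j f differentiable (at x)) \<and>
     (\<forall>x y. \<bar>x - y\<bar> \<le> \<gamma> \<longrightarrow>
        \<bar>lder (r_of \<beta>) f x - lder (r_of \<beta>) f y\<bar>
          \<le> fact (r_of \<beta>) * poly L x * \<bar>y - x\<bar> powr (\<beta> - real (r_of \<beta>))) \<and>
     (\<forall>j \<le> r_of \<beta>. \<bar>lder j f 0\<bar> \<le> lp) \<and>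
     (\<forall>j \<in> {1..r_of \<beta>}.
        (\<integral>\<^sup>+x. ennreal (\<bar>lder j f x\<bar> powr ((2 * \<beta> + \<epsilon>) / real j) * f x) \<partial>lborel)
          \<le> ennreal C) \<and>
     (\<integral>\<^sup>+x. ennreal (\<bar>poly L x\<bar> powr (2 + \<epsilon> / \<beta>) * f x) \<partial>lborel) \<le> ennreal C \<and>
     (\<forall>x. f x \<le> M * psi x) \<and>
     (\<forall>x y. x \<le> y \<and> y < - \<alpha> \<longrightarrow> f x \<le> f y) \<and>
     (\<forall>x y. \<alpha> < x \<and> x \<le> y \<longrightarrow> f y \<le> f x) \<and>
     (\<forall>x. - \<alpha> \<le> x \<and> x \<le> \<alpha> \<longrightarrow> f x \<ge> \<xi>)}"

definition mixture ::
  "nat \<Rightarrow> (nat \<Rightarrow> real) \<Rightarrow> (nat \<Rightarrow> real) \<Rightarrow> (nat \<Rightarrow> real) \<Rightarrow> real \<Rightarrow> real" where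
  "mixture k p \<mu> \<sigma> x = (\<Sum>u\<in>{1..k}. p u * psi_s (\<sigma> u) (x - \<mu> u))"

definition AP ::
  "real \<Rightarrow> real \<Rightarrow> real \<Rightarrow> real \<Rightarrow> real \<Rightarrow> real \<Rightarrow> real poly \<Rightarrow> real \<Rightarrow> real
     \<Rightarrow> real \<Rightarrow> real \<Rightarrow> real \<Rightarrow> bool" where
  "AP G Gt \<beta>l \<beta>u \<gamma> lp L \<epsilon> C \<alpha> \<xi> M \<longleftrightarrow>
    (\<exists>\<sigma>bar c :: real \<Rightarrow> real.
       continuous_on {\<beta>l..\<beta>u} \<sigma>bar \<and> continuous_on {\<beta>l..\<beta>u} c \<and>
       (\<forall>\<beta> \<in> {\<beta>l..\<beta>u}. 0 < \<sigma>bar \<beta> \<and> \<sigma>bar \<beta> < 1 \<and> 0 < c \<beta> \<and>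
          (\<forall>f \<in> Hclass \<beta> \<gamma> lp L \<epsilon> C \<alpha> \<xi> M. \<forall>\<sigma>. 0 < \<sigma> \<and> \<sigma> < \<sigma>bar \<beta> \<longrightarrow>
             (\<exists>m' :: nat. \<exists>p \<mu> :: nat \<Rightarrow> real.
                real m' < G * \<sigma> powr (-1) * \<bar>ln \<sigma>\<bar> powr (3/2) \<and>
                (\<forall>u \<in> {1..m'}. \<bar>\<mu> u\<bar> \<le> Gt * \<bar>ln \<sigma>\<bar> powr (1/2)) \<and>
                (\<forall>u \<in> {1..m'}. 0 \<le> p u) \<and> (\<Sum>u\<in>{1..m'}. p u) = 1 \<and>
                KL f (mixture m' p \<mu> (\<lambda>_. \<sigma>)) \<le> ereal (c \<beta> * \<sigma> powr (2 * \<beta>))))))"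

definition lam_low :: "real \<Rightarrow> nat \<Rightarrow> real" where
  "lam_low a m = (a * (1 / real m) * ln (real m) powr (3/2))\<^sup>2"

definition mu_bar :: "real \<Rightarrow> real \<Rightarrow> nat \<Rightarrow> real" where
  "mu_bar Gt a m = Gt * \<bar>ln (sqrt (lam_low a m))\<bar> powr (1/2)"

definition model :: "real \<Rightarrow> real \<Rightarrow> real \<Rightarrow> nat \<Rightarrow> (real \<Rightarrow> real) set" where
  "model Gt a lam_up m = {mixture m p \<mu> \<sigma> | p \<mu> \<sigma>.
     (\<forall>u \<in> {1..m}. \<mu> u \<in> {- mu_bar Gt a m .. mu_bar Gt a m}) \<and>
     (\<forall>u \<in> {1..m}. \<sigma> u > 0 \<and> (\<sigma> u)\<^sup>2 \<in> {lam_low a m .. lam_up}) \<and>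
     (\<forall>u \<in> {1..m}. p u \<in> {0..1}) \<and> (\<Sum>u\<in>{1..m}. p u) = 1}"

end

theory Submission
  imports Defs "HOL-Probability.Distributions"
begin

(* Put sigma = sqrt (lam_low a m). While sigma lies below the threshold of (AP), which can be
   chosen uniformly in beta because sigma_bar and c are continuous on a compact interval, the
   approximating mixture has fewer than G sigma^-1 |ln sigma|^(3/2) <= m components and means in
   [-mu_bar m, mu_bar m]; padded with zero weights it lies in S_m, whence
   KL(s, S_m) <= c sigma^(2 beta) = c lam_low(m)^beta.  For the remaining m, sigma is bounded
   below and the single Gaussian psi_sigma in S_m already has KL(s, psi_sigma)
   bounded by a constant, thanks to s <= M psi. *)

lemma psi_pos: "0 < psi x"
  unfolding psi_def by simp

lemma psi_s_pos: "0 < \<sigma> \<Longrightarrow> 0 < psi_s \<sigma> x"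
  unfolding psi_s_def using psi_pos by simp

lemma psi_measurable [measurable]: "psi \<in> borel_measurable borel"
  unfolding psi_def by measurable

lemma psi_s_measurable [measurable]: "psi_s \<sigma> \<in> borel_measurable borel"
  unfolding psi_s_def by measurable

lemma ln_psi: "ln (psi x) = - x\<^sup>2 - ln (sqrt pi)"
  unfolding psi_def by (simp add: ln_div)

lemma ln_psi_s: "0 < \<sigma> \<Longrightarrow> ln (psi_s \<sigma> x) = - (x / \<sigma>)\<^sup>2 - ln (sqrt pi) - ln \<sigma>"
  unfolding psi_s_def using psi_pos[of "x / \<sigma>"] by (simp add: ln_div ln_psi)

lemma integrable_sqrt_psi: "integrable lborel (\<lambda>x. sqrt (psi x))"
proof -
  have "sqrt (exp y) = exp (y / 2)" for y :: real
    by (rule real_sqrt_unique) (simp_all add: power2_eq_square exp_add[symmetric])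
  then have "sqrt (psi x) = sqrt (2 * pi) / sqrt (sqrt pi) * std_normal_density x" for x
    unfolding psi_def std_normal_density_def by (simp add: real_sqrt_divide)
  then show ?thesis
    by simp
qed

lemma has_bochner_integral_power2_mult_psi: "has_bochner_integral lborel (\<lambda>x. x\<^sup>2 * psi x) (1/2)"
proof -
  have "psi x = normal_density 0 (1 / sqrt 2) x" for x
    unfolding psi_def normal_density_def by (simp add: power_divide)
  moreover have "has_bochner_integral lborel (\<lambda>x. normal_density 0 (1 / sqrt 2) x * (x - 0) ^ (2 * 1))
      (fact (2 * 1) / ((2 / (1 / sqrt 2)\<^sup>2) ^ 1 * fact 1))"
    by (rule normal_moment_even) simp
  ultimately show ?thesis
    by (simp add: mult.commute power_divide)
qed

lemma
  assumes "is_density s"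
  shows is_density_integrable: "integrable lborel s"
    and is_density_integral: "(\<integral>x. s x \<partial>lborel) = 1"
proof -
  have [measurable]: "s \<in> borel_measurable lborel" and nonneg: "\<And>x. 0 \<le> s x"
    and one: "(\<integral>\<^sup>+x. ennreal (s x) \<partial>lborel) = 1"
    using assms unfolding is_density_def by auto
  show int: "integrable lborel s"
    by (rule integrableI_nonneg) (simp_all add: nonneg one)
  have "ennreal (\<integral>x. s x \<partial>lborel) = 1"
    using nn_integral_eq_integral[OF int] nonneg one by simp
  then show "(\<integral>x. s x \<partial>lborel) = 1"
    using integral_nonneg_AE[of s lborel] nonneg by (simp add: ennreal_1[symmetric] del: ennreal_1)
qed

lemma mult_ln_ge_neg_sqrt:
  fixes y :: real
  assumes "0 < y"
  shows "- 2 * sqrt y \<le> y * ln y"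
proof -
  have "1 - 1 / sqrt y \<le> ln (sqrt y)"
    using ln_le_minus_one[of "inverse (sqrt y)"] assms by (simp add: ln_inverse divide_inverse)
  then have "y * (2 - 2 / sqrt y) \<le> y * ln y"
    using assms by (intro mult_left_mono) (simp_all add: ln_sqrt)
  moreover have "y * (2 - 2 / sqrt y) = 2 * y - 2 * sqrt y"
    using assms by (simp add: field_simps)
  ultimately show ?thesis
    using assms by simp
qed

lemma ln_div_psi_s:
  assumes "0 < y" "0 < \<sigma>"
  shows "ln (y / psi_s \<sigma> x) = ln y + (x / \<sigma>)\<^sup>2 + ln (sqrt pi) + ln \<sigma>"
  using assms psi_s_pos[of \<sigma> x] by (simp add: ln_div ln_psi_s)

lemma KL_psi_s_integrand_le:
  assumes y: "0 < y" "y \<le> M * psi x" and \<sigma>: "0 < \<sigma>"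
  shows "y * ln (y / psi_s \<sigma> x) \<le> (\<bar>ln M\<bar> + \<bar>ln \<sigma>\<bar>) * y + M / \<sigma>\<^sup>2 * (x\<^sup>2 * psi x)"
proof -
  have "0 < M"
    using y psi_pos[of x] by (metis order_less_le_trans zero_less_mult_pos2)
  have "ln y \<le> ln (M * psi x)"
    using y psi_pos[of x] by simp
  also have "\<dots> = ln M - x\<^sup>2 - ln (sqrt pi)"
    using \<open>0 < M\<close> psi_pos[of x] by (simp add: ln_mult ln_psi)
  finally have "ln (y / psi_s \<sigma> x) \<le> \<bar>ln M\<bar> + \<bar>ln \<sigma>\<bar> + (x / \<sigma>)\<^sup>2"
    unfolding ln_div_psi_s[OF y(1) \<sigma>] by (smt (verit) zero_le_power2)
  then have "y * ln (y / psi_s \<sigma> x) \<le> y * (\<bar>ln M\<bar> + \<bar>ln \<sigma>\<bar> + (x / \<sigma>)\<^sup>2)"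
    by (rule mult_left_mono) (use y in simp)
  also have "\<dots> = (\<bar>ln M\<bar> + \<bar>ln \<sigma>\<bar>) * y + y * (x / \<sigma>)\<^sup>2"
    by (simp add: algebra_simps)
  also have "y * (x / \<sigma>)\<^sup>2 \<le> M * psi x * (x / \<sigma>)\<^sup>2"
    using y by (intro mult_right_mono) simp_all
  finally show ?thesis
    by (simp add: field_simps)
qed

(* s ln s need not be dominated by s; the bound -2 sqrt (M psi) is what makes the KL
   integrand integrable. *)
lemma KL_psi_s_integrand_ge:
  assumes y: "0 < y" "y \<le> M * psi x" and \<sigma>: "0 < \<sigma>"
  shows "- \<bar>ln \<sigma>\<bar> * y - 2 * sqrt M * sqrt (psi x) \<le> y * ln (y / psi_s \<sigma> x)"
proof -
  have "sqrt y \<le> sqrt M * sqrt (psi x)"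
    using y by (simp add: real_sqrt_mult[symmetric])
  then have "- 2 * sqrt M * sqrt (psi x) \<le> y * ln y"
    using mult_ln_ge_neg_sqrt[OF y(1)] by linarith
  moreover have "- \<bar>ln \<sigma>\<bar> \<le> (x / \<sigma>)\<^sup>2 + ln (sqrt pi) + ln \<sigma>"
    using pi_gt3 by (smt (verit) zero_le_power2 ln_ge_zero real_sqrt_ge_one)
  then have "y * - \<bar>ln \<sigma>\<bar> \<le> y * ((x / \<sigma>)\<^sup>2 + ln (sqrt pi) + ln \<sigma>)"
    by (rule mult_left_mono) (use y in simp)
  ultimately show ?thesis
    unfolding ln_div_psi_s[OF y(1) \<sigma>] by (simp add: algebra_simps)
qed

lemma KL_psi_s_le:
  assumes s: "is_density s" "\<forall>x. 0 < s x" "\<forall>x. s x \<le> M * psi x" and \<sigma>: "0 < \<sigma>"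
  shows "KL s (psi_s \<sigma>) \<le> ereal (\<bar>ln M\<bar> + \<bar>ln \<sigma>\<bar> + M / (2 * \<sigma>\<^sup>2))"
proof -
  define f where "f x = s x * ln (s x / psi_s \<sigma> x)" for x
  define upper where "upper x = (\<bar>ln M\<bar> + \<bar>ln \<sigma>\<bar>) * s x + M / \<sigma>\<^sup>2 * (x\<^sup>2 * psi x)" for x
  define lower where "lower x = - \<bar>ln \<sigma>\<bar> * s x - 2 * sqrt M * sqrt (psi x)" for x
  have [measurable]: "s \<in> borel_measurable borel"
    using s(1) unfolding is_density_def by simp
  have f_le: "f x \<le> upper x" and f_ge: "lower x \<le> f x" for x
    unfolding f_def upper_def lower_def
    using KL_psi_s_integrand_le KL_psi_s_integrand_ge s \<sigma> by auto
  have int_s: "integrable lborel s"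
    by (rule is_density_integrable[OF s(1)])
  note moment = has_bochner_integral_power2_mult_psi
  have int_upper: "integrable lborel upper" and int_lower: "integrable lborel lower"
    unfolding upper_def lower_def
    using int_s integrable.intros[OF moment] integrable_sqrt_psi by auto
  have int_f: "integrable lborel f"
  proof (rule Bochner_Integration.integrable_bound)
    show "integrable lborel (\<lambda>x. \<bar>upper x\<bar> + \<bar>lower x\<bar>)"
      using int_upper int_lower by auto
    show "f \<in> borel_measurable lborel"
      unfolding f_def by measurable
    show "AE x in lborel. norm (f x) \<le> norm (\<bar>upper x\<bar> + \<bar>lower x\<bar>)"
    proof (rule AE_I2)
      fix x
      show "norm (f x) \<le> norm (\<bar>upper x\<bar> + \<bar>lower x\<bar>)"
        using f_le[of x] f_ge[of x] by auto
    qed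
  qed
  have "KL s (psi_s \<sigma>) = ereal (\<integral>x. f x \<partial>lborel)"
    using int_f psi_s_pos[OF \<sigma>] s(2) unfolding KL_def f_def by simp
  also have "(\<integral>x. f x \<partial>lborel) \<le> (\<integral>x. upper x \<partial>lborel)"
    using int_f int_upper f_le by (intro integral_mono) auto
  also have "(\<integral>x. upper x \<partial>lborel) = \<bar>ln M\<bar> + \<bar>ln \<sigma>\<bar> + M / (2 * \<sigma>\<^sup>2)"
  proof (rule has_bochner_integral_integral_eq)
    have "has_bochner_integral lborel s 1"
      using has_bochner_integral_integrable[OF int_s] is_density_integral[OF s(1)] by simp
    then have "has_bochner_integral lborel upper ((\<bar>ln M\<bar> + \<bar>ln \<sigma>\<bar>) * 1 + M / \<sigma>\<^sup>2 * (1/2))"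
      unfolding upper_def using moment by (intro has_bochner_integral_add has_bochner_integral_mult_right)
    then show "has_bochner_integral lborel upper (\<bar>ln M\<bar> + \<bar>ln \<sigma>\<bar> + M / (2 * \<sigma>\<^sup>2))"
      by (simp add: mult.commute)
  qed
  finally show ?thesis
    by simp
qed

lemma sqrt_lam_low:
  assumes "0 < a" "1 \<le> m"
  shows "sqrt (lam_low a m) = a / real m * ln (real m) powr (3/2)"
  using assms unfolding lam_low_def by simp

lemma lam_low_pos: "0 < a \<Longrightarrow> 2 \<le> m \<Longrightarrow> 0 < lam_low a m"
  unfolding lam_low_def by simp

lemma mixture_size_le:
  fixes m :: nat
  assumes m: "2 \<le> m" and a: "1 < a" and G: "0 \<le> G"
    and hyp: "G / a * (ln a / ln 2 + 3) powr (3/2) \<le> 1" and small: "sqrt (lam_low a m) < 1"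
  shows "G * sqrt (lam_low a m) powr -1 * \<bar>ln (sqrt (lam_low a m))\<bar> powr (3/2) \<le> real m"
proof -
  define t where "t = ln (real m)"
  define \<sigma> where "\<sigma> = sqrt (lam_low a m)"
  define K where "K = ln a / ln 2 + 3"
  have "ln 2 \<le> t"
    unfolding t_def using m by simp
  then have t: "2/3 \<le> t"
    using ln2_ge_two_thirds by linarith
  have \<sigma>_eq: "\<sigma> = a / real m * t powr (3/2)"
    unfolding \<sigma>_def t_def using a m by (simp add: sqrt_lam_low)
  have \<sigma>: "0 < \<sigma>"
    unfolding \<sigma>_eq using a m t by simp
  have "ln \<sigma> = ln a - t + 3/2 * ln t"
    unfolding \<sigma>_eq t_def using a m t t_def by (simp add: ln_mult ln_div)
  moreover have "- ln t \<le> 1 / t - 1"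
    using ln_le_minus_one[of "1 / t"] t by (simp add: ln_div)
  moreover have "1 / t \<le> 3/2"
    using t by (simp add: field_simps)
  moreover have "0 \<le> ln a" "0 \<le> ln a / ln 2 * t"
    using a t by simp_all
  moreover have "ln \<sigma> < 0"
    using \<sigma> small unfolding \<sigma>_def by simp
  ultimately have ln_\<sigma>: "\<bar>ln \<sigma>\<bar> \<le> K * t"
    unfolding K_def distrib_right using t by linarith
  have K: "0 \<le> K"
    unfolding K_def using a by simp
  have "G * \<sigma> powr -1 * \<bar>ln \<sigma>\<bar> powr (3/2) \<le> G * \<sigma> powr -1 * (K * t) powr (3/2)"
    using G \<sigma> ln_\<sigma> by (intro mult_left_mono powr_mono2) auto
  also have "\<dots> = real m * (G / a * K powr (3/2))"
    using \<sigma> a m t K unfolding \<sigma>_eq by (simp add: powr_mult powr_minus field_simps)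
  also have "\<dots> \<le> real m"
    using mult_left_mono[OF hyp, of "real m"] unfolding K_def by simp
  finally show ?thesis
    unfolding \<sigma>_def .
qed

lemma mixture_in_model:
  assumes "m' \<le> m" and \<mu>: "\<forall>u\<in>{1..m'}. \<bar>\<mu> u\<bar> \<le> mu_bar Gt a m"
    and p: "\<forall>u\<in>{1..m'}. 0 \<le> p u" "(\<Sum>u\<in>{1..m'}. p u) = 1"
    and \<sigma>: "0 < \<sigma>" "lam_low a m \<le> \<sigma>\<^sup>2" "\<sigma>\<^sup>2 \<le> lam_up"
  shows "mixture m' p \<mu> (\<lambda>_. \<sigma>) \<in> model Gt a lam_up m"
proof -
  define p' where "p' u = (if u \<le> m' then p u else 0)" for u
  define \<mu>' where "\<mu>' u = (if u \<le> m' then \<mu> u else 0)" for u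
  have sub: "{1..m'} \<subseteq> {1..m}"
    using \<open>m' \<le> m\<close> by auto
  have "1 \<le> m'"
    using p(2) by (cases m') auto
  then have "0 \<le> mu_bar Gt a m"
    using \<mu> by (meson abs_ge_zero atLeastAtMost_iff order_refl order_trans)
  then have \<mu>': "\<mu>' u \<in> {- mu_bar Gt a m..mu_bar Gt a m}" if "u \<in> {1..m}" for u
    using \<mu> that by (force simp: \<mu>'_def abs_le_iff)
  have p_le_1: "p u \<le> 1" if "u \<in> {1..m'}" for u
    using member_le_sum[of u "{1..m'}" p] that p by auto
  have p': "p' u \<in> {0..1}" if "u \<in> {1..m}" for u
    using p p_le_1 that by (auto simp: p'_def)
  have "(\<Sum>u\<in>{1..m}. p' u) = (\<Sum>u\<in>{1..m'}. p u)"
    by (rule sum.mono_neutral_cong_right[OF _ sub]) (auto simp: p'_def)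
  then have sum_p': "(\<Sum>u\<in>{1..m}. p' u) = 1"
    using p(2) by simp
  have "mixture m' p \<mu> (\<lambda>_. \<sigma>) = mixture m p' \<mu>' (\<lambda>_. \<sigma>)"
    unfolding mixture_def
    by (intro ext sum.mono_neutral_cong_left[OF _ sub]) (auto simp: p'_def \<mu>'_def)
  then show ?thesis
    unfolding model_def using \<mu>' p' sum_p' \<sigma> by (intro CollectI exI[of _ p'] exI[of _ \<mu>'] exI[of _ "\<lambda>_. \<sigma>"]) auto
qed

definition gauss_mixture_approx :: "real \<Rightarrow> real \<Rightarrow> (real \<Rightarrow> real) \<Rightarrow> real \<Rightarrow> real \<Rightarrow> bool" where
  "gauss_mixture_approx G Gt f \<sigma> B \<longleftrightarrow>
    (\<exists>m' p \<mu>. real m' < G * \<sigma> powr -1 * \<bar>ln \<sigma>\<bar> powr (3/2) \<and>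
       (\<forall>u\<in>{1..m'}. \<bar>\<mu> u\<bar> \<le> Gt * \<bar>ln \<sigma>\<bar> powr (1/2)) \<and>
       (\<forall>u\<in>{1..m'}. 0 \<le> p u) \<and> (\<Sum>u\<in>{1..m'}. p u) = 1 \<and>
       KL f (mixture m' p \<mu> (\<lambda>_. \<sigma>)) \<le> ereal B)"

lemma AP_iff_gauss_mixture_approx:
  "AP G Gt \<beta>l \<beta>u \<gamma> lp L \<epsilon> C \<alpha> \<xi> M \<longleftrightarrow>
    (\<exists>\<sigma>bar c. continuous_on {\<beta>l..\<beta>u} \<sigma>bar \<and> continuous_on {\<beta>l..\<beta>u} c \<and>
       (\<forall>\<beta>\<in>{\<beta>l..\<beta>u}. 0 < \<sigma>bar \<beta> \<and> \<sigma>bar \<beta> < 1 \<and> 0 < c \<beta> \<and>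
          (\<forall>f\<in>Hclass \<beta> \<gamma> lp L \<epsilon> C \<alpha> \<xi> M. \<forall>\<sigma>. 0 < \<sigma> \<and> \<sigma> < \<sigma>bar \<beta> \<longrightarrow>
             gauss_mixture_approx G Gt f \<sigma> (c \<beta> * \<sigma> powr (2 * \<beta>)))))"
  unfolding AP_def gauss_mixture_approx_def ..

lemma gauss_mixture_approx_mono:
  "gauss_mixture_approx G Gt f \<sigma> B \<Longrightarrow> B \<le> B' \<Longrightarrow> gauss_mixture_approx G Gt f \<sigma> B'"
  unfolding gauss_mixture_approx_def by (blast intro: order_trans[OF _ ereal_less_eq(3)[THEN iffD2]])

lemma AP_uniform:
  assumes "AP G Gt \<beta>l \<beta>u \<gamma> lp L \<epsilon> C \<alpha> \<xi> M" "\<beta>l \<le> \<beta>u"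
  obtains c \<sigma>0 where "0 < c" "0 < \<sigma>0" "\<sigma>0 < 1"
    "\<And>\<beta> f \<sigma>. \<beta> \<in> {\<beta>l..\<beta>u} \<Longrightarrow> f \<in> Hclass \<beta> \<gamma> lp L \<epsilon> C \<alpha> \<xi> M \<Longrightarrow> 0 < \<sigma> \<Longrightarrow> \<sigma> < \<sigma>0 \<Longrightarrow>
       gauss_mixture_approx G Gt f \<sigma> (c * \<sigma> powr (2 * \<beta>))"
proof -
  obtain \<sigma>bar c' where cont: "continuous_on {\<beta>l..\<beta>u} \<sigma>bar" "continuous_on {\<beta>l..\<beta>u} c'"
    and approx: "\<forall>\<beta>\<in>{\<beta>l..\<beta>u}. 0 < \<sigma>bar \<beta> \<and> \<sigma>bar \<beta> < 1 \<and> 0 < c' \<beta> \<and>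
          (\<forall>f\<in>Hclass \<beta> \<gamma> lp L \<epsilon> C \<alpha> \<xi> M. \<forall>\<sigma>. 0 < \<sigma> \<and> \<sigma> < \<sigma>bar \<beta> \<longrightarrow>
             gauss_mixture_approx G Gt f \<sigma> (c' \<beta> * \<sigma> powr (2 * \<beta>)))"
    using assms(1) unfolding AP_iff_gauss_mixture_approx by blast
  have ne: "{\<beta>l..\<beta>u} \<noteq> {}"
    using assms(2) by simp
  obtain \<beta>1 where \<beta>1: "\<beta>1 \<in> {\<beta>l..\<beta>u}" "\<forall>\<beta>\<in>{\<beta>l..\<beta>u}. c' \<beta> \<le> c' \<beta>1"
    using continuous_attains_sup[OF compact_Icc ne cont(2)] by blast
  obtain \<beta>0 where \<beta>0: "\<beta>0 \<in> {\<beta>l..\<beta>u}" "\<forall>\<beta>\<in>{\<beta>l..\<beta>u}. \<sigma>bar \<beta>0 \<le> \<sigma>bar \<beta>"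
    using continuous_attains_inf[OF compact_Icc ne cont(1)] by blast
  show thesis
  proof (rule that[of "c' \<beta>1" "\<sigma>bar \<beta>0"])
    fix \<beta> f \<sigma>
    assume \<beta>: "\<beta> \<in> {\<beta>l..\<beta>u}" and "f \<in> Hclass \<beta> \<gamma> lp L \<epsilon> C \<alpha> \<xi> M" "0 < \<sigma>" "\<sigma> < \<sigma>bar \<beta>0"
    then have "gauss_mixture_approx G Gt f \<sigma> (c' \<beta> * \<sigma> powr (2 * \<beta>))"
      using approx \<beta>0 by (meson order_less_le_trans)
    then show "gauss_mixture_approx G Gt f \<sigma> (c' \<beta>1 * \<sigma> powr (2 * \<beta>))"
      by (rule gauss_mixture_approx_mono) (use \<beta> \<beta>1 in \<open>simp add: mult_right_mono\<close>)
  qed (use approx \<beta>0 \<beta>1 in auto)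
qed

lemma KL_set_model_le_if_gauss_mixture_approx:
  assumes approx: "gauss_mixture_approx G Gt s (sqrt (lam_low a m)) B"
    and "2 \<le> m" "1 < a" "0 \<le> G" "G / a * (ln a / ln 2 + 3) powr (3/2) \<le> 1"
    and small: "sqrt (lam_low a m) < 1" and "lam_low a m \<le> lam_up"
  shows "KL_set s (model Gt a lam_up m) \<le> ereal B"
proof -
  obtain m' p \<mu> where "real m' < G * sqrt (lam_low a m) powr -1 * \<bar>ln (sqrt (lam_low a m))\<bar> powr (3/2)"
    and \<mu>: "\<forall>u\<in>{1..m'}. \<bar>\<mu> u\<bar> \<le> mu_bar Gt a m"
    and p: "\<forall>u\<in>{1..m'}. 0 \<le> p u" "(\<Sum>u\<in>{1..m'}. p u) = 1"
    and KL: "KL s (mixture m' p \<mu> (\<lambda>_. sqrt (lam_low a m))) \<le> ereal B"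
    using approx unfolding gauss_mixture_approx_def mu_bar_def by blast
  with mixture_size_le[OF assms(2-5) small] have "m' \<le> m"
    by linarith
  then have "mixture m' p \<mu> (\<lambda>_. sqrt (lam_low a m)) \<in> model Gt a lam_up m"
    using assms lam_low_pos[of a m] by (intro mixture_in_model[OF _ \<mu> p]) simp_all
  then show ?thesis
    unfolding KL_set_def using KL by (meson INF_lower order_trans)
qed

lemma KL_set_model_le_single_gaussian:
  assumes s: "is_density s" "\<forall>x. 0 < s x" "\<forall>x. s x \<le> M * psi x"
    and "1 \<le> m" "0 \<le> Gt" and \<sigma>0: "0 < \<sigma>0" "\<sigma>0\<^sup>2 \<le> lam_low a m" and "lam_low a m \<le> lam_up"
  shows "KL_set s (model Gt a lam_up m)
    \<le> ereal (\<bar>ln M\<bar> + \<bar>ln \<sigma>0\<bar> + \<bar>ln (sqrt lam_up)\<bar> + M / (2 * \<sigma>0\<^sup>2))"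
proof -
  define \<sigma> where "\<sigma> = sqrt (lam_low a m)"
  have "0 < lam_low a m"
    using \<sigma>0 by (smt (verit) zero_less_power)
  then have \<sigma>: "\<sigma>0 \<le> \<sigma>" "\<sigma> \<le> sqrt lam_up" "\<sigma>\<^sup>2 = lam_low a m"
    using assms unfolding \<sigma>_def by (auto simp: real_le_rsqrt)
  have M: "0 \<le> M"
    using s psi_pos by (metis order_less_le_trans less_eq_real_def zero_less_mult_pos2)
  have "mixture 1 (\<lambda>_. 1) (\<lambda>_. 0) (\<lambda>_. \<sigma>) \<in> model Gt a lam_up m"
    using assms \<sigma> by (intro mixture_in_model) (auto simp: mu_bar_def)
  moreover have "mixture 1 (\<lambda>_. 1) (\<lambda>_. 0) (\<lambda>_. \<sigma>) = psi_s \<sigma>"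
    by (simp add: mixture_def fun_eq_iff)
  ultimately have "KL_set s (model Gt a lam_up m) \<le> KL s (psi_s \<sigma>)"
    unfolding KL_set_def by (metis INF_lower)
  also have "\<dots> \<le> ereal (\<bar>ln M\<bar> + \<bar>ln \<sigma>\<bar> + M / (2 * \<sigma>\<^sup>2))"
    using \<sigma> \<sigma>0 by (intro KL_psi_s_le s) simp
  also have "\<dots> \<le> ereal (\<bar>ln M\<bar> + \<bar>ln \<sigma>0\<bar> + \<bar>ln (sqrt lam_up)\<bar> + M / (2 * \<sigma>0\<^sup>2))"
  proof -
    have "ln \<sigma>0 \<le> ln \<sigma>" "ln \<sigma> \<le> ln (sqrt lam_up)"
      using \<sigma> \<sigma>0 by (auto intro!: ln_mono)
    then have "\<bar>ln \<sigma>\<bar> \<le> \<bar>ln \<sigma>0\<bar> + \<bar>ln (sqrt lam_up)\<bar>"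
      by arith
    moreover have "M / (2 * \<sigma>\<^sup>2) \<le> M / (2 * \<sigma>0\<^sup>2)"
      using \<sigma> \<sigma>0 M \<open>0 < lam_low a m\<close> by (intro divide_left_mono mult_left_mono power_mono) auto
    ultimately show ?thesis
      by simp
  qed
  finally show ?thesis .
qed

lemma min_one_powr_le_powr:
  fixes l0 l \<beta> \<beta>u :: real
  assumes "0 < l0" "l0 \<le> l" "0 \<le> \<beta>" "\<beta> \<le> \<beta>u"
  shows "min 1 (l0 powr \<beta>u) \<le> l powr \<beta>"
proof (cases "1 \<le> l")
  case True
  then show ?thesis
    using ge_one_powr_ge_zero[OF True assms(3)] by linarith
next
  case False
  have "l0 powr \<beta>u \<le> l powr \<beta>u"
    using assms by (intro powr_mono2) auto
  also have "\<dots> \<le> l powr \<beta>"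
    using assms False by (intro powr_mono') auto
  finally show ?thesis
    by linarith
qed

lemma KL_set_model_le_large_scale:
  assumes s: "is_density s" "\<forall>x. 0 < s x" "\<forall>x. s x \<le> M * psi x"
    and "1 \<le> m" "0 \<le> Gt" and \<sigma>0: "0 < \<sigma>0" "\<sigma>0\<^sup>2 \<le> lam_low a m" and "lam_low a m \<le> lam_up"
    and \<beta>: "0 \<le> \<beta>" "\<beta> \<le> \<beta>u"
  shows "KL_set s (model Gt a lam_up m)
    \<le> ereal ((\<bar>ln M\<bar> + \<bar>ln \<sigma>0\<bar> + \<bar>ln (sqrt lam_up)\<bar> + M / (2 * \<sigma>0\<^sup>2)) / min 1 (\<sigma>0\<^sup>2 powr \<beta>u)
              * lam_low a m powr \<beta>)"
proof -
  define K where "K = \<bar>ln M\<bar> + \<bar>ln \<sigma>0\<bar> + \<bar>ln (sqrt lam_up)\<bar> + M / (2 * \<sigma>0\<^sup>2)"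
  define \<delta> where "\<delta> = min 1 (\<sigma>0\<^sup>2 powr \<beta>u)"
  have "0 \<le> M"
    using s psi_pos by (metis order_less_le_trans less_eq_real_def zero_less_mult_pos2)
  then have "0 \<le> K / \<delta>"
    unfolding K_def \<delta>_def by simp
  moreover have "0 < \<delta>" "\<delta> \<le> lam_low a m powr \<beta>"
    unfolding \<delta>_def using \<sigma>0 \<beta> by (auto intro: min_one_powr_le_powr)
  ultimately have "K \<le> K / \<delta> * lam_low a m powr \<beta>"
    by (metis less_irrefl mult_left_mono nonzero_eq_divide_eq)
  moreover have "KL_set s (model Gt a lam_up m) \<le> ereal K"
    unfolding K_def by (rule KL_set_model_le_single_gaussian) (use assms in simp_all)
  ultimately show ?thesis
    unfolding K_def \<delta>_def by (meson ereal_less_eq(3) order_trans)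
qed

theorem lemma7:
  fixes \<beta>l \<beta>u G Gt a lam_up \<gamma> lp \<epsilon> C \<alpha> \<xi> M :: real
    and L :: "real poly"
  assumes "0 < \<beta>l" and "\<beta>l < \<beta>u"
    and "0 < \<gamma>" and "0 < lp" and "0 < \<epsilon>" and "0 < C" and "0 < \<alpha>" and "0 < \<xi>" and "0 < M"
    and "0 < G" and "0 < Gt"
    and "AP G Gt \<beta>l \<beta>u \<gamma> lp L \<epsilon> C \<alpha> \<xi> M"
    and "1 < a" and "G / a * (ln a / ln 2 + 3) powr (3/2) \<le> 1"
    and "\<forall>m. lam_up > lam_low a m"
  shows "\<exists>c > 0. \<forall>\<beta> \<in> {\<beta>l..\<beta>u}. \<forall>s \<in> Hclass \<beta> \<gamma> lp L \<epsilon> C \<alpha> \<xi> M. \<forall>m \<ge> 2.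
           KL_set s (model Gt a lam_up m) \<le> ereal (c * lam_low a m powr \<beta>)"
proof -
  obtain C1 \<sigma>0 where C1: "0 < C1" and \<sigma>0: "0 < \<sigma>0" "\<sigma>0 < 1"
    and approx: "\<And>\<beta> f \<sigma>. \<beta> \<in> {\<beta>l..\<beta>u} \<Longrightarrow> f \<in> Hclass \<beta> \<gamma> lp L \<epsilon> C \<alpha> \<xi> M \<Longrightarrow> 0 < \<sigma> \<Longrightarrow>
      \<sigma> < \<sigma>0 \<Longrightarrow> gauss_mixture_approx G Gt f \<sigma> (C1 * \<sigma> powr (2 * \<beta>))"
    using AP_uniform[OF assms(12)] assms(2) by (metis less_imp_le)
  define K where "K = (\<bar>ln M\<bar> + \<bar>ln \<sigma>0\<bar> + \<bar>ln (sqrt lam_up)\<bar> + M / (2 * \<sigma>0\<^sup>2)) / min 1 (\<sigma>0\<^sup>2 powr \<beta>u)"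
  have "KL_set s (model Gt a lam_up m) \<le> ereal (max C1 K * lam_low a m powr \<beta>)"
    if \<beta>: "\<beta> \<in> {\<beta>l..\<beta>u}" and s: "s \<in> Hclass \<beta> \<gamma> lp L \<epsilon> C \<alpha> \<xi> M" and m: "2 \<le> m" for \<beta> s m
  proof (cases "sqrt (lam_low a m) < \<sigma>0")
    case True
    have lam: "0 < lam_low a m" "lam_low a m \<le> lam_up"
      using lam_low_pos m assms(13,15) by (auto simp: less_imp_le)
    then have "C1 * sqrt (lam_low a m) powr (2 * \<beta>) = C1 * lam_low a m powr \<beta>"
      by (simp add: powr_half_sqrt[symmetric] powr_powr)
    moreover have "sqrt (lam_low a m) < 1"
      using True \<sigma>0 by linarith
    ultimately have "KL_set s (model Gt a lam_up m) \<le> ereal (C1 * lam_low a m powr \<beta>)"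
      using approx[OF \<beta> s _ True] lam assms(10)
      by (intro KL_set_model_le_if_gauss_mixture_approx[OF _ m assms(13) _ assms(14)]) auto
    then show ?thesis
      by (rule order_trans) (simp add: mult_right_mono)
  next
    case False
    then have "\<sigma>0\<^sup>2 \<le> lam_low a m"
      using \<sigma>0 by (metis less_imp_le not_less lam_low_def real_sqrt_le_iff real_sqrt_pow2 power_mono zero_le_power2)
    then have "KL_set s (model Gt a lam_up m) \<le> ereal (K * lam_low a m powr \<beta>)"
      unfolding K_def using s m \<beta> assms(1,11,15) \<sigma>0
      by (intro KL_set_model_le_large_scale) (auto simp: Hclass_def less_imp_le)
    then show ?thesis
      by (rule order_trans) (simp add: mult_right_mono)
  qed
  then show ?thesis
    using C1 by (intro exI[of _ "max C1 K"]) auto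
qed

end
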